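(* In the changepoint model of the context, for $0<i\le n$, $$\tilde q_i=\sum_{\ell=i}^{n-1}\tilde c_{i\ell}\,\tilde q_{\ell+1}+\tilde c_{in}.$$
   Context: Model: Let $n\ge 1$ and fix observed data $y_1,\dots,y_n$. Let $(\mathbb X,\mathcal X)$, $(\mathbb Y,\mathcal Y)$ be standard Borel spaces, $\psi$ a $\sigma$-finite measure on $(\mathbb Y,\mathcal Y)$, $\mathcal J$ a probability measure on $(\mathbb X,\mathcal X)$, and $q_{ji}\in[0,1]$ for $0\le j<i\le n$. The model consists of random variables $C_i\in\{0,\dots,i\}$, $X_i\in\mathbb X$, $Y_i\in\mathbb Y$, $i=1,\dots,n$, with joint law factorizing as: $P(C_1=0)=q_{01}$, $P(C_1=1)=1-q_{01}$; for $i\ge2$, $C_i$ depends on the past only through $C_{i-1}$, with $P(C_i=j\mid C_{i-1}=j)=q_{ji}$ and $P(C_i=i\mid C_{i-1}=j)=1-q_{ji}$ ($0\le j\le i-1$); $X_1\sim\mathcal J$ independent of $C_1$; for $i\ge 2$, $X_i$ depends on the past only through $(C_i,X_{i-1})$, with $X_i\sim\mathcal J$ if $C_i=i$ and $X_i=X_{i-1}$ if $C_i<i$; $Y_i$ depends on all other variables only through $X_i$, with density $p(Y_i=y\mid X_i=x)$ w.r.t. $\psi$. Assume $\int\prod_{\ell=j}^i p(Y_\ell=y_\ell\mid X_\ell=x)\,\mathcal J(dx)>0$ for all $0<j\le i\le n$. $Y_{a:b}=y_{a:b}$ abbreviates $Y_a=y_a,\dots,Y_b=y_b$. Notation: $\tilde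 c_{ji}=P(C_i=j\mid C_{i+1}=i+1,Y_{1:i}=y_{1:i})$ for $0<i<n$, and $\tilde c_{jn}=P(C_n=j\mid Y_{1:n}=y_{1:n})$; $\tilde q_i=P(C_i=i\mid Y_{1:n}=y_{1:n})$. *)

theory Defs
  imports "HOL-Probability.Probability"
begin

text \<open>A changepoint path is a function c with c i = C_i for
  i in {1..n}, c i \<le> i, and c i = 0 outside {1..n} (in particular c 0 = 0,
  which makes the law of C_1 a special case of the general transition).\<close>

definition cpaths :: "nat \<Rightarrow> (nat \<Rightarrow> nat) set" where
  "cpaths n = {c. (\<forall>i\<in>{1..n}. c i \<le> i) \<and> (\<forall>i. i \<notin> {1..n} \<longrightarrow> c i = 0)}"

text \<open>Transition probability P(C_i = k | C_{i-1} = j).\<close>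
definition ctrans :: "(nat \<Rightarrow> nat \<Rightarrow> real) \<Rightarrow> nat \<Rightarrow> nat \<Rightarrow> nat \<Rightarrow> real" where
  "ctrans q i j k = (if k = i then 1 - q j i else if k = j then q j i else 0)"

definition cprior :: "(nat \<Rightarrow> nat \<Rightarrow> real) \<Rightarrow> nat \<Rightarrow> (nat \<Rightarrow> nat) \<Rightarrow> real" where
  "cprior q n c = (\<Prod>i\<in>{1..n}. ctrans q i (c (i - 1)) (c i))"

fun xpath :: "(nat \<Rightarrow> nat) \<Rightarrow> (nat \<Rightarrow> 'x) \<Rightarrow> nat \<Rightarrow> 'x" where
  "xpath c z 0 = z 0"
| "xpath c z (Suc i) = (if i = 0 \<or> c (Suc i) = Suc i then z (Suc i) else xpath c z i)"

text \<open>Likelihood (density w.r.t. psi^m) of Y_{1:m} = y_{1:m} given C_{1:n} = c.\<close>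
definition cplik :: "'x measure \<Rightarrow> (nat \<Rightarrow> 'x \<Rightarrow> 'y \<Rightarrow> real) \<Rightarrow> (nat \<Rightarrow> 'y)
    \<Rightarrow> nat \<Rightarrow> nat \<Rightarrow> (nat \<Rightarrow> nat) \<Rightarrow> real" where
  "cplik J p y n m c =
     (\<integral>z. (\<Prod>l\<in>{1..m}. p l (xpath c z l) (y l)) \<partial>(PiM {1..n} (\<lambda>_. J)))"

text \<open>Joint density of the event {C_{1:n} satisfies E} together with Y_{1:m} = y_{1:m}.\<close>
definition cpdens :: "'x measure \<Rightarrow> (nat \<Rightarrow> 'x \<Rightarrow> 'y \<Rightarrow> real) \<Rightarrow> (nat \<Rightarrow> 'y)
    \<Rightarrow> (nat \<Rightarrow> nat \<Rightarrow> real) \<Rightarrow> nat \<Rightarrow> nat \<Rightarrow> ((nat \<Rightarrow> nat) \<Rightarrow> bool) \<Rightarrow> real" where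
  "cpdens J p y q n m E =
     (\<Sum>c\<in>cpaths n. if E c then cprior q n c * cplik J p y n m c else 0)"

definition qtilde :: "'x measure \<Rightarrow> (nat \<Rightarrow> 'x \<Rightarrow> 'y \<Rightarrow> real) \<Rightarrow> (nat \<Rightarrow> 'y)
    \<Rightarrow> (nat \<Rightarrow> nat \<Rightarrow> real) \<Rightarrow> nat \<Rightarrow> nat \<Rightarrow> real" where
  "qtilde J p y q n i = cpdens J p y q n n (\<lambda>c. c i = i) / cpdens J p y q n n (\<lambda>_. True)"

text \<open>c~_{ji} = P(C_i = j | C_{i+1} = i+1, Y_{1:i} = y_{1:i}) for i < n,
  and c~_{jn} = P(C_n = j | Y_{1:n} = y_{1:n}).\<close>
definition ctilde :: "'x measure \<Rightarrow> (nat \<Rightarrow> 'x \<Rightarrow> 'y \<Rightarrow> real) \<Rightarrow> (nat \<Rightarrow> 'y)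
    \<Rightarrow> (nat \<Rightarrow> nat \<Rightarrow> real) \<Rightarrow> nat \<Rightarrow> nat \<Rightarrow> nat \<Rightarrow> real" where
  "ctilde J p y q n j i =
     (if i < n then cpdens J p y q n i (\<lambda>c. c i = j \<and> c (Suc i) = Suc i)
                    / cpdens J p y q n i (\<lambda>c. c (Suc i) = Suc i)
      else cpdens J p y q n n (\<lambda>c. c n = j) / cpdens J p y q n n (\<lambda>_. True))"

end

theory Submission
  imports Defs
begin

text \<open>A segment starting at i ends either at some l < n, where the next changepoint is
  C_{l+1} = l+1, or at n; so the event C_i = i splits into the disjoint events
  C_l = i, C_{l+1} = l+1 (i \<le> l < n) and C_n = i. It remains to see that
  P(C_l = i, C_{l+1} = l+1 | Y_{1:n}) = c~_{il} q~_{l+1}, i.e. that once a changepoint at l+1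
  is given, Y_{l+1:n} carries no information about C_{1:l}. This holds because the latent
  states before and after l+1 are then independent fresh draws, so the joint density of a path
  and the data factorizes into a factor depending only on C_{1:l+1} and Y_{1:l} and a factor
  depending only on C_{l+1:n} and Y_{l+1:n}.\<close>

fun seg_start :: "(nat \<Rightarrow> nat) \<Rightarrow> nat \<Rightarrow> nat" where
  "seg_start c 0 = 0"
| "seg_start c (Suc i) = (if i = 0 \<or> c (Suc i) = Suc i then Suc i else seg_start c i)"

lemma xpath_eq_seg_start: "xpath c z l = z (seg_start c l)"
  by (induction l) auto

lemma seg_start_le: "seg_start c l \<le> l"
  by (induction l) auto

lemma seg_start_pos: "1 \<le> l \<Longrightarrow> 1 \<le> seg_start c l"
  by (induction l) auto

lemma seg_start_prefix_cong: "(\<And>j. j \<le> l \<Longrightarrow> c j = c' j) \<Longrightarrow> seg_start c l = seg_start c' l"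
  by (induction l) auto

lemma seg_start_after_changepoint: "c (Suc L) = Suc L \<Longrightarrow> L < l \<Longrightarrow> Suc L \<le> seg_start c l"
  by (induction l) (auto simp: less_Suc_eq)

lemma seg_start_suffix_cong:
  assumes "c (Suc L) = Suc L" "c' (Suc L) = Suc L" "\<And>j. L < j \<Longrightarrow> j \<le> l \<Longrightarrow> c j = c' j" "L < l"
  shows "seg_start c l = seg_start c' l"
  using assms by (induction l) (auto simp: less_Suc_eq)

definition splice_at :: "nat \<Rightarrow> (nat \<Rightarrow> 'a) \<Rightarrow> (nat \<Rightarrow> 'a) \<Rightarrow> nat \<Rightarrow> 'a" where
  "splice_at L c c' k = (if k \<le> L then c k else c' k)"

text \<open>Exchanging the prefixes of a pair (c, c') is an involution of A \<times> B.\<close>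
lemma sum_mult_sum_splice_exchange:
  fixes V W :: "(nat \<Rightarrow> 'a) \<Rightarrow> 'b::semiring_0"
  assumes "finite A" "finite B"
    and closed: "\<And>c c'. c \<in> A \<Longrightarrow> c' \<in> B \<Longrightarrow> splice_at L c c' \<in> A \<and> splice_at L c' c \<in> B"
    and exchange: "\<And>c c'. c \<in> A \<Longrightarrow> c' \<in> B \<Longrightarrow> V (splice_at L c c') * W (splice_at L c' c) = W c * V c'"
  shows "sum W A * sum V B = sum V A * sum W B"
proof -
  define sw :: "(nat \<Rightarrow> 'a) \<times> (nat \<Rightarrow> 'a) \<Rightarrow> _"
    where "sw = (\<lambda>(c, c'). (splice_at L c c', splice_at L c' c))"
  have "sum W A * sum V B = (\<Sum>(c, c')\<in>A \<times> B. W c * V c')"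
    by (simp add: sum_product sum.cartesian_product)
  also have "\<dots> = (\<Sum>(c, c')\<in>A \<times> B. V c * W c')"
    by (rule sum.reindex_bij_witness[where i=sw and j=sw])
       (auto simp: sw_def closed exchange splice_at_def fun_eq_iff)
  also have "\<dots> = sum V A * sum W B"
    by (simp add: sum_product sum.cartesian_product)
  finally show ?thesis .
qed

lemma finite_cpaths: "finite (cpaths n)"
proof -
  have "cpaths n \<subseteq> {f. \<forall>x. (x \<in> {1..n} \<longrightarrow> f x \<in> {0..n}) \<and> (x \<notin> {1..n} \<longrightarrow> f x = 0)}"
    unfolding cpaths_def by (auto intro: order_trans)
  then show ?thesis
    by (rule finite_subset) (intro finite_set_of_finite_funs; simp)
qed

lemma splice_at_in_cpaths: "c \<in> cpaths n \<Longrightarrow> c' \<in> cpaths n \<Longrightarrow> splice_at L c c' \<in> cpaths n"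
  by (auto simp: cpaths_def splice_at_def)

lemma cpdens_eq_sum:
  "cpdens J p y q n m E = (\<Sum>c\<in>{c\<in>cpaths n. E c}. cprior q n c * cplik J p y n m c)"
  unfolding cpdens_def by (simp add: sum.inter_filter[OF finite_cpaths])

lemma cprior_nonneg:
  assumes "\<forall>j i. j < i \<and> i \<le> n \<longrightarrow> 0 \<le> q j i \<and> q j i \<le> 1" and "c \<in> cpaths n"
  shows "0 \<le> cprior q n c"
  unfolding cprior_def
proof (intro prod_nonneg)
  fix k assume k: "k \<in> {1..n}"
  have "c (k - 1) \<le> k - 1"
    using assms(2) k by (cases "k = 1") (auto simp: cpaths_def)
  then have "c (k - 1) < k"
    using k by auto
  then show "0 \<le> ctrans q k (c (k - 1)) (c k)"
    using assms(1) k by (auto simp: ctrans_def)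
qed

lemma cprior_nonzero_imp_step:
  assumes "cprior q n c \<noteq> 0" "k \<in> {1..n}"
  shows "c k = k \<or> c k = c (k - 1)"
proof (rule ccontr)
  assume "\<not> ?thesis"
  then have "ctrans q k (c (k - 1)) (c k) = 0" by (auto simp: ctrans_def)
  then have "cprior q n c = 0"
    unfolding cprior_def using assms(2) by (intro prod_zero) auto
  with assms(1) show False by simp
qed

lemma cprior_splice_at_exchange:
  assumes "L < n" "c (Suc L) = c' (Suc L)"
  shows "cprior q n (splice_at L c c') * cprior q n (splice_at L c' c) = cprior q n c * cprior q n c'"
proof -
  define step where "step c k = ctrans q k (c (k - 1)) (c k)" for c k
  have split: "cprior q n d = prod (step d) {1..Suc L} * prod (step d) {Suc (Suc L)..n}" for d
    using prod.ub_add_nat[of 1 "Suc L" "step d" "n - Suc L"] assms(1)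
    by (simp add: cprior_def step_def)
  have "prod (step (splice_at L c c')) {1..Suc L} = prod (step c) {1..Suc L}"
    "prod (step (splice_at L c' c)) {1..Suc L} = prod (step c') {1..Suc L}"
    using assms(2) by (auto intro!: prod.cong simp: step_def splice_at_def le_Suc_eq)
  moreover have "prod (step (splice_at L c c')) {Suc (Suc L)..n} = prod (step c') {Suc (Suc L)..n}"
    "prod (step (splice_at L c' c)) {Suc (Suc L)..n} = prod (step c) {Suc (Suc L)..n}"
    by (auto intro!: prod.cong simp: step_def splice_at_def)
  ultimately show ?thesis
    unfolding split by (simp add: ac_simps)
qed

lemma cplik_splice_at: "cplik J p y n L (splice_at L c c') = cplik J p y n L c"
proof -
  have "seg_start (splice_at L c c') l = seg_start c l" if "l \<le> L" for l
    using that by (intro seg_start_prefix_cong) (auto simp: splice_at_def)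
  then show ?thesis
    unfolding cplik_def xpath_eq_seg_start by (intro Bochner_Integration.integral_cong prod.cong) auto
qed

definition seg_lik :: "'x measure \<Rightarrow> (nat \<Rightarrow> 'x \<Rightarrow> 'y \<Rightarrow> real) \<Rightarrow> (nat \<Rightarrow> 'y)
    \<Rightarrow> nat \<Rightarrow> (nat \<Rightarrow> nat) \<Rightarrow> nat \<Rightarrow> ennreal" where
  "seg_lik J p y m c k = (\<integral>\<^sup>+ x. ennreal (\<Prod>l\<in>{l\<in>{1..m}. seg_start c l = k}. p l x (y l)) \<partial>J)"

definition suffix_lik :: "'x measure \<Rightarrow> (nat \<Rightarrow> 'x \<Rightarrow> 'y \<Rightarrow> real) \<Rightarrow> (nat \<Rightarrow> 'y)
    \<Rightarrow> nat \<Rightarrow> nat \<Rightarrow> (nat \<Rightarrow> nat) \<Rightarrow> real" where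
  "suffix_lik J p y n L c = enn2real (\<Prod>k\<in>{Suc L..n}. seg_lik J p y n c k)"

lemma suffix_lik_splice_at:
  assumes "c (Suc L) = Suc L"
  shows "suffix_lik J p y n L (splice_at L c' c) = suffix_lik J p y n L c"
proof -
  have "seg_start (splice_at L c' c) l = k \<longleftrightarrow> seg_start c l = k" if "Suc L \<le> k" for l k
  proof (cases "l \<le> L")
    case True
    then show ?thesis
      using that seg_start_le[of c l] seg_start_le[of "splice_at L c' c" l] by auto
  next
    case False
    then show ?thesis
      using assms by (subst seg_start_suffix_cong[of "splice_at L c' c" L c]) (auto simp: splice_at_def)
  qed
  then show ?thesis
    unfolding suffix_lik_def seg_lik_def by (intro arg_cong[where f=enn2real] prod.cong refl) auto
qed

locale changepoint_obs =
  fixes J :: "'x measure" and p :: "nat \<Rightarrow> 'x \<Rightarrow> 'y \<Rightarrow> real" and y :: "nat \<Rightarrow> 'y" and n :: nat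
  assumes prob_space_J: "prob_space J"
    and obs_measurable: "\<And>l. l \<in> {1..n} \<Longrightarrow> (\<lambda>x. p l x (y l)) \<in> borel_measurable J"
    and obs_nonneg: "\<And>l x. l \<in> {1..n} \<Longrightarrow> x \<in> space J \<Longrightarrow> 0 \<le> p l x (y l)"
begin

text \<open>Grouping the factors by segment, the integrand is a product of functions of distinct
  coordinates z_k, so the product measure splits the integral.\<close>
lemma cplik_eq_prod_seg_lik:
  assumes "m \<le> n"
  shows "cplik J p y n m c = enn2real (\<Prod>k\<in>{1..n}. seg_lik J p y m c k)"
proof -
  interpret product_sigma_finite "\<lambda>_. J"
    using prob_space_J by (simp add: product_sigma_finite_def prob_space_imp_sigma_finite)
  define G where "G k x = (\<Prod>l\<in>{l\<in>{1..m}. seg_start c l = k}. p l x (y l))" for k x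
  have segments: "seg_start c ` {1..m} \<subseteq> {1..n}"
  proof (intro image_subsetI)
    fix l assume "l \<in> {1..m}"
    then show "seg_start c l \<in> {1..n}"
      using seg_start_pos[of l c] seg_start_le[of c l] assms by simp
  qed
  have grouped: "(\<Prod>l\<in>{1..m}. p l (xpath c z l) (y l)) = (\<Prod>k\<in>{1..n}. G k (z k))" for z
  proof -
    have "(\<Prod>k\<in>{1..n}. G k (z k))
        = (\<Prod>k\<in>{1..n}. \<Prod>l\<in>{l\<in>{1..m}. seg_start c l = k}. p l (z (seg_start c l)) (y l))"
      unfolding G_def by (intro prod.cong) auto
    also have "\<dots> = (\<Prod>l\<in>{1..m}. p l (xpath c z l) (y l))"
      unfolding xpath_eq_seg_start by (rule prod.group[OF _ _ segments]) simp_all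
    finally show ?thesis ..
  qed
  have G_measurable: "G k \<in> borel_measurable J" for k
    unfolding G_def using obs_measurable assms by (intro borel_measurable_prod) auto
  have G_nonneg: "0 \<le> G k x" if "x \<in> space J" for k x
    unfolding G_def using obs_nonneg assms that by (intro prod_nonneg) auto
  have integrand_measurable:
      "(\<lambda>z. \<Prod>k\<in>{1..n}. G k (z k)) \<in> borel_measurable (PiM {1..n} (\<lambda>_. J))"
    using G_measurable
    by (intro borel_measurable_prod) (auto intro: measurable_comp[OF measurable_component_singleton])
  have coord: "z k \<in> space J" if "z \<in> space (PiM I (\<lambda>_. J))" "k \<in> I" for z k and I :: "nat set"
    using that by (auto simp: space_PiM)
  have "cplik J p y n m c = (\<integral>z. (\<Prod>k\<in>{1..n}. G k (z k)) \<partial>PiM {1..n} (\<lambda>_. J))"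
    unfolding cplik_def grouped ..
  also have "\<dots> = enn2real (\<integral>\<^sup>+z. ennreal (\<Prod>k\<in>{1..n}. G k (z k)) \<partial>PiM {1..n} (\<lambda>_. J))"
    by (rule integral_eq_nn_integral[OF integrand_measurable])
       (auto intro!: AE_I2 prod_nonneg G_nonneg coord)
  also have "(\<integral>\<^sup>+z. ennreal (\<Prod>k\<in>{1..n}. G k (z k)) \<partial>PiM {1..n} (\<lambda>_. J))
      = (\<integral>\<^sup>+z. (\<Prod>k\<in>{1..n}. ennreal (G k (z k))) \<partial>PiM {1..n} (\<lambda>_. J))"
    by (intro nn_integral_cong prod_ennreal[symmetric]) (auto intro!: G_nonneg coord)
  also have "\<dots> = (\<Prod>k\<in>{1..n}. \<integral>\<^sup>+x. ennreal (G k x) \<partial>J)"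
    using G_measurable by (intro product_nn_integral_prod) auto
  finally show ?thesis
    by (simp add: seg_lik_def G_def)
qed

lemma cplik_nonneg: "m \<le> n \<Longrightarrow> 0 \<le> cplik J p y n m c"
  by (simp add: cplik_eq_prod_seg_lik)

lemma cplik_split_at_changepoint:
  assumes "L < n" "c (Suc L) = Suc L"
  shows "cplik J p y n n c = cplik J p y n L c * suffix_lik J p y n L c"
proof -
  have split: "prod f {1..n} = prod f {1..L} * prod f {Suc L..n}" for f :: "nat \<Rightarrow> ennreal"
    using prod.ub_add_nat[of 1 L f "n - L"] assms(1) by simp
  have "seg_lik J p y n c k = seg_lik J p y L c k" if "k \<le> L" for k
  proof -
    have "seg_start c l \<noteq> k" if "L < l" for l
      using seg_start_after_changepoint[of c L l, OF assms(2) that] \<open>k \<le> L\<close> by simp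
    then have "{l\<in>{1..n}. seg_start c l = k} = {l\<in>{1..L}. seg_start c l = k}"
      using assms(1) by (auto simp: not_less[symmetric])
    then show ?thesis by (simp add: seg_lik_def)
  qed
  moreover have "seg_lik J p y L c k = 1" if "Suc L \<le> k" for k
  proof -
    have "seg_start c l \<noteq> k" if "l \<le> L" for l
      using seg_start_le[of c l] that \<open>Suc L \<le> k\<close> by simp
    then have no_obs: "{l\<in>{1..L}. seg_start c l = k} = {}"
      by auto
    show ?thesis
      unfolding seg_lik_def no_obs using prob_space.emeasure_space_1[OF prob_space_J] by simp
  qed
  ultimately have prefix: "prod (seg_lik J p y n c) {1..L} = prod (seg_lik J p y L c) {1..n}"
    unfolding split[of "seg_lik J p y L c"] by simp
  show ?thesis
    unfolding cplik_eq_prod_seg_lik[OF order_refl] cplik_eq_prod_seg_lik[OF less_imp_le[OF assms(1)]]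
      split[of "seg_lik J p y n c"] prefix suffix_lik_def enn2real_mult ..
qed

text \<open>Given a changepoint at L + 1, path weights factorize into a part depending on C_{1:L+1}
  and a part depending on C_{L+1:n}; exchanging prefixes then matches the terms of both sides.\<close>
lemma cpdens_changepoint_cross:
  assumes "L < n" and prefix_event: "\<And>c c'. (\<And>k. k \<le> L \<Longrightarrow> c k = c' k) \<Longrightarrow> E c = E c'"
  shows "cpdens J p y q n n (\<lambda>c. E c \<and> c (Suc L) = Suc L) * cpdens J p y q n L (\<lambda>c. c (Suc L) = Suc L)
       = cpdens J p y q n L (\<lambda>c. E c \<and> c (Suc L) = Suc L) * cpdens J p y q n n (\<lambda>c. c (Suc L) = Suc L)"
proof -
  define A where "A = {c \<in> cpaths n. E c \<and> c (Suc L) = Suc L}"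
  define B where "B = {c \<in> cpaths n. c (Suc L) = Suc L}"
  define W where "W m c = cprior q n c * cplik J p y n m c" for m c
  have "sum (W n) A * sum (W L) B = sum (W L) A * sum (W n) B"
  proof (rule sum_mult_sum_splice_exchange)
    show "finite A" "finite B"
      using finite_cpaths by (simp_all add: A_def B_def)
  next
    fix c c' assume "c \<in> A" "c' \<in> B"
    then show "splice_at L c c' \<in> A \<and> splice_at L c' c \<in> B"
      using prefix_event[of "splice_at L c c'" c]
      by (auto simp: A_def B_def splice_at_in_cpaths splice_at_def)
  next
    fix c c' assume "c \<in> A" "c' \<in> B"
    then have c: "c (Suc L) = Suc L" and c': "c' (Suc L) = Suc L"
      by (simp_all add: A_def B_def)
    have "splice_at L c' c (Suc L) = Suc L"
      using c by (simp add: splice_at_def)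
    then have lik_spliced: "cplik J p y n n (splice_at L c' c) = cplik J p y n L c' * suffix_lik J p y n L c"
      by (simp add: cplik_split_at_changepoint[OF assms(1)] cplik_splice_at
          suffix_lik_splice_at[of c L J p y n c', OF c])
    have lik: "cplik J p y n n c = cplik J p y n L c * suffix_lik J p y n L c"
      by (rule cplik_split_at_changepoint[of L c, OF assms(1) c])
    have "W L (splice_at L c c') * W n (splice_at L c' c)
        = (cprior q n (splice_at L c c') * cprior q n (splice_at L c' c))
          * (cplik J p y n L c * suffix_lik J p y n L c * cplik J p y n L c')"
      by (simp add: W_def lik_spliced cplik_splice_at mult_ac)
    also have "\<dots> = (cprior q n c * cprior q n c')
          * (cplik J p y n L c * suffix_lik J p y n L c * cplik J p y n L c')"
      using c c' by (simp only: cprior_splice_at_exchange[OF assms(1)])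
    also have "\<dots> = W n c * W L c'"
      by (simp add: W_def lik mult_ac)
    finally show "W L (splice_at L c c') * W n (splice_at L c' c) = W n c * W L c'" .
  qed
  then show ?thesis
    by (simp add: cpdens_eq_sum A_def B_def W_def)
qed

text \<open>That is, P(E | C_{L+1} = L+1, Y_{1:L}) = P(E | C_{L+1} = L+1, Y_{1:n}) for events E
  determined by C_{1:L}. A null conditioning event gives 0 on the left (x / 0 = 0), and then the
  right-hand side vanishes too.\<close>
lemma cpdens_changepoint_cond:
  assumes q: "\<forall>j i. j < i \<and> i \<le> n \<longrightarrow> 0 \<le> q j i \<and> q j i \<le> 1"
    and "L < n" and prefix_event: "\<And>c c'. (\<And>k. k \<le> L \<Longrightarrow> c k = c' k) \<Longrightarrow> E c = E c'"
  shows "cpdens J p y q n L (\<lambda>c. E c \<and> c (Suc L) = Suc L) / cpdens J p y q n L (\<lambda>c. c (Suc L) = Suc L)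
           * cpdens J p y q n n (\<lambda>c. c (Suc L) = Suc L)
       = cpdens J p y q n n (\<lambda>c. E c \<and> c (Suc L) = Suc L)"
proof (cases "cpdens J p y q n L (\<lambda>c. c (Suc L) = Suc L) = 0")
  case False
  then show ?thesis
    using cpdens_changepoint_cross[OF assms(2) prefix_event] by (simp add: field_simps)
next
  case True
  define B where "B = {c \<in> cpaths n. c (Suc L) = Suc L}"
  have "finite B"
    using finite_cpaths by (simp add: B_def)
  moreover have "\<forall>c\<in>B. 0 \<le> cprior q n c * cplik J p y n L c"
    using cprior_nonneg[OF q] cplik_nonneg assms(2) by (simp add: B_def)
  moreover have "(\<Sum>c\<in>B. cprior q n c * cplik J p y n L c) = 0"
    using True by (simp add: cpdens_eq_sum B_def)
  ultimately have vanish: "cprior q n c * cplik J p y n L c = 0" if "c \<in> B" for c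
    using sum_nonneg_eq_0_iff[of B "\<lambda>c. cprior q n c * cplik J p y n L c"] that by blast
  have "cpdens J p y q n n (\<lambda>c. E c \<and> c (Suc L) = Suc L) = 0"
    unfolding cpdens_eq_sum
  proof (intro sum.neutral ballI)
    fix c assume "c \<in> {c \<in> cpaths n. E c \<and> c (Suc L) = Suc L}"
    then have "c \<in> B" and "c (Suc L) = Suc L"
      by (simp_all add: B_def)
    then show "cprior q n c * cplik J p y n n c = 0"
      using vanish[of c] by (auto simp: cplik_split_at_changepoint[OF assms(2)])
  qed
  with True show ?thesis by simp
qed

end

lemma segment_end_indicator:
  fixes w :: "'a::comm_monoid_add"
  assumes c: "c \<in> cpaths n" "cprior q n c \<noteq> 0" and i: "1 \<le> i" "i \<le> m" and "m \<le> n"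
  shows "(if c i = i then w else 0)
           = (\<Sum>l\<in>{i..<m}. if c l = i \<and> c (Suc l) = Suc l then w else 0) + (if c m = i then w else 0)"
  using i(2) \<open>m \<le> n\<close>
proof (induction m rule: dec_induct)
  case base
  then show ?case by simp
next
  case (step m)
  have "c m \<le> m"
    using c(1) step i(1) by (auto simp: cpaths_def)
  moreover have "c (Suc m) = Suc m \<or> c (Suc m) = c m"
    using cprior_nonzero_imp_step[OF c(2), of "Suc m"] step by simp
  ultimately have "(if c m = i then w else 0)
      = (if c m = i \<and> c (Suc m) = Suc m then w else 0) + (if c (Suc m) = i then w else 0)"
    using step by auto
  with step show ?case by (simp add: add.assoc)
qed

lemma cpdens_segment_partition:
  assumes "1 \<le> i" "i \<le> n"
  shows "cpdens J p y q n m (\<lambda>c. c i = i)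
    = (\<Sum>l\<in>{i..<n}. cpdens J p y q n m (\<lambda>c. c l = i \<and> c (Suc l) = Suc l)) + cpdens J p y q n m (\<lambda>c. c n = i)"
proof -
  define W where "W c = cprior q n c * cplik J p y n m c" for c
  have "(if c i = i then W c else 0)
      = (\<Sum>l\<in>{i..<n}. if c l = i \<and> c (Suc l) = Suc l then W c else 0) + (if c n = i then W c else 0)"
    if "c \<in> cpaths n" for c
  proof (cases "cprior q n c = 0")
    case False
    then show ?thesis by (rule segment_end_indicator[OF that _ assms order_refl])
  qed (simp add: W_def sum.neutral)
  then show ?thesis
    unfolding cpdens_def W_def[symmetric] by (simp add: sum.distrib sum.swap[of _ "{i..<n}"])
qed

theorem mainTheorem9:
  fixes J :: "'x measure" and \<psi> :: "'y measure"
    and p :: "nat \<Rightarrow> 'x \<Rightarrow> 'y \<Rightarrow> real" and q :: "nat \<Rightarrow> nat \<Rightarrow> real"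
    and y :: "nat \<Rightarrow> 'y" and n i :: nat
  assumes "n \<ge> 1"
    and "prob_space J"
    and "sigma_finite_measure \<psi>"
    and "\<forall>j i. j < i \<and> i \<le> n \<longrightarrow> 0 \<le> q j i \<and> q j i \<le> 1"
    and "\<forall>l. (\<lambda>(x, v). p l x v) \<in> borel_measurable (J \<Otimes>\<^sub>M \<psi>)"
    and "\<forall>l. \<forall>x\<in>space J. (\<forall>v\<in>space \<psi>. 0 \<le> p l x v)
                         \<and> (\<integral>\<^sup>+ v. ennreal (p l x v) \<partial>\<psi>) = 1"
    and "\<forall>l\<in>{1..n}. y l \<in> space \<psi>"
    and "\<forall>j i. 0 < j \<and> j \<le> i \<and> i \<le> n \<longrightarrow>
            0 < (\<integral>x. (\<Prod>l\<in>{j..i}. p l x (y l)) \<partial>J)"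
    and "0 < i" and "i \<le> n"
  shows "qtilde J p y q n i =
           (\<Sum>l\<in>{i..n-1}. ctilde J p y q n i l * qtilde J p y q n (l + 1))
           + ctilde J p y q n i n"
proof -
  have "(\<lambda>x. p l x (y l)) \<in> borel_measurable J \<and> (\<forall>x\<in>space J. 0 \<le> p l x (y l))"
    if "l \<in> {1..n}" for l
  proof -
    have "y l \<in> space \<psi>"
      using assms(7) that by simp
    then show ?thesis
      using measurable_comp[OF measurable_Pair2'[of "y l" \<psi> J], of "\<lambda>(x, v). p l x v" borel] assms(5,6)
      by (simp add: comp_def)
  qed
  then interpret changepoint_obs J p y n
    using assms(2) by (intro changepoint_obs.intro) auto
  have cond: "ctilde J p y q n i l * qtilde J p y q n (l + 1)
      = cpdens J p y q n n (\<lambda>c. c l = i \<and> c (Suc l) = Suc l) / cpdens J p y q n n (\<lambda>_. True)"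
    if "l \<in> {i..<n}" for l
    using cpdens_changepoint_cond[OF assms(4), of l "\<lambda>c. c l = i"] that
    by (simp add: ctilde_def qtilde_def)
  have "{i..n-1} = {i..<n}"
    using assms(1) by auto
  with cond show ?thesis
    using cpdens_segment_partition[of i n J p y q n] assms(9,10)
    by (simp add: ctilde_def qtilde_def sum_divide_distrib add_divide_distrib)
qed

end
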